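(* Let $N$ be a Poisson random measure on $\mathcal W=[0,1]\times\mathbb R^+\times\mathcal X$ with mean intensity $\nu(du,ds,dx)=\rho(du|s)\Lambda_0(ds,dx)$ and let $S(t-)=\exp\big(-\int I\{s<t\}[-\log(1-u)]N(du,ds,dx)\big)$. Let $t_1>t_2>\dots>t_k>0$ be fixed and $m_1,\dots,m_k$ positive integers, with $r_0=0$ and $r_j=\sum_{l=1}^jm_l$. Then $$\mathbb E\Big[\prod_{j=1}^{k}S(t_j-)^{m_j}\,\Big|\,\nu\Big]=\prod_{j=1}^{k}\exp\Big(-\int_0^{t_j}\psi_{m_j,r_{j-1}}(s)\Lambda_0(ds)\Big).$$ In particular, when $k=n$ and all $m_j=1$ (no ties), this equals $\prod_{j=1}^n\exp\big(-\int_0^{t_j}\psi_{1,j-1}(s)\Lambda_0(ds)\big)$.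
   Context: $\mathcal X$ is a Polish space; $\Lambda_0(ds,dx)$ is a hazard measure on $\mathbb R^+\times\mathcal X$ (hazard of a probability measure $F_0$, i.e. $\Lambda_0(ds,dx)=F_0(ds,dx)/S_0(s-)$ with $S_0(s)=F_0((s,\infty)\times\mathcal X)$), assumed without atoms in $s$, and $\Lambda_0(ds)=\Lambda_0(ds,\mathcal X)$. For each $s$, $\rho(du|s)$ is a Lévy measure on $[0,1]$. For integers $i,k\ge0$, $\psi_{i,k}(s)=\int_0^1(1-(1-u)^i)(1-u)^k\rho(du|s)$. *)

theory Defs
  imports "HOL-Probability.Probability"
begin

text \<open>State space W = [0,1] x R+ x X of the Poisson random measure; points are (u, s, x).\<close>
definition Wspace :: "(real \<times> real \<times> 'x::polish_space) measure" where
  "Wspace = restrict_space borel ({0..1} \<times> {0..} \<times> UNIV)"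

text \<open>Levy measure on [0,1]: no mass at 0 and integrates u (i.e. min(1,u)).\<close>
definition levy_measure_01 :: "real measure \<Rightarrow> bool" where
  "levy_measure_01 \<mu> \<longleftrightarrow> sets \<mu> = sets (restrict_space borel {0..1::real})
     \<and> emeasure \<mu> {0} = 0 \<and> (\<integral>\<^sup>+ u. ennreal u \<partial>\<mu>) < \<infinity>"

text \<open>Hazard measure of a probability measure F0 on R+ x X:
  Lambda0(ds,dx) = F0(ds,dx) / S0(s-), with S0(s-) = F0([s,oo) x X).\<close>
definition hazard_measure :: "(real \<times> 'x::polish_space) measure \<Rightarrow> (real \<times> 'x) measure" where
  "hazard_measure F0 = density F0 (\<lambda>(s,x). inverse (emeasure F0 ({s..} \<times> UNIV)))"

definition marginal_s :: "(real \<times> 'x::polish_space) measure \<Rightarrow> real measure" where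
  "marginal_s L = distr L borel fst"

definition psi :: "(real \<Rightarrow> real measure) \<Rightarrow> nat \<Rightarrow> nat \<Rightarrow> real \<Rightarrow> ennreal" where
  "psi \<rho> i k s = (\<integral>\<^sup>+ u. ennreal ((1 - (1 - u) ^ i) * (1 - u) ^ k) \<partial>(\<rho> s))"

definition exp_neg :: "ennreal \<Rightarrow> real" where
  "exp_neg a = (if a = \<infinity> then 0 else exp (- enn2real a))"

definition neglog1m :: "real \<Rightarrow> ennreal" where
  "neglog1m u = (if u < 1 then ennreal (- ln (1 - u)) else \<infinity>)"

definition surv_minus :: "(real \<times> real \<times> 'x) measure \<Rightarrow> real \<Rightarrow> real" where
  "surv_minus Nw t = exp_neg (\<integral>\<^sup>+ w. indicator {w. fst (snd w) < t} w * neglog1m (fst w) \<partial>Nw)"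

definition poisson_random_measure ::
  "'o measure \<Rightarrow> 'w measure \<Rightarrow> 'w measure \<Rightarrow> ('o \<Rightarrow> 'w measure) \<Rightarrow> bool" where
  "poisson_random_measure P W \<nu> N \<longleftrightarrow>
     prob_space P \<and> sets \<nu> = sets W \<and>
     (\<forall>\<omega>\<in>space P. sets (N \<omega>) = sets W) \<and>
     (\<forall>A\<in>sets W. (\<lambda>\<omega>. emeasure (N \<omega>) A) \<in> borel_measurable P) \<and>
     (\<forall>A\<in>sets W. emeasure \<nu> A < \<infinity> \<longrightarrow>
        (\<forall>n::nat. measure P {\<omega>\<in>space P. emeasure (N \<omega>) A = of_nat n}
            = exp (- enn2real (emeasure \<nu> A)) * enn2real (emeasure \<nu> A) ^ n / fact n)) \<and>
     (\<forall>A\<in>sets W. emeasure \<nu> A = \<infinity> \<longrightarrow> (AE \<omega> in P. emeasure (N \<omega>) A = \<infinity>)) \<and>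
     (\<forall>(A :: nat \<Rightarrow> 'w set) I. finite I \<longrightarrow> A ` I \<subseteq> sets W \<longrightarrow> disjoint_family_on A I \<longrightarrow>
        prob_space.indep_vars P (\<lambda>_. borel) (\<lambda>i \<omega>. emeasure (N \<omega>) (A i)) I)"

end

theory Submission
  imports Defs
begin

text \<open>
  The proof rests on the Laplace functional of a Poisson random measure,
  E exp(- \<integral> g dN) = exp(- \<integral> (1 - exp(- g)) d\<nu>), obtained for simple g from the Poisson law
  of the counts and their independence on disjoint sets, and for measurable g by monotone
  approximation. The product of the S(t_j-)^m_j is exp(- \<integral> g dN) for
  g(u,s,x) = \<Sum>_j m_j I{s < t_j} (-log(1 - u)), so exp(- g) is the product of the (1 - u)^m_j
  over the j with s < t_j. As the t_j decrease, these j form an initial segment, and 1 - exp(- g)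
  telescopes into \<Sum>_j I{s < t_j} (1 - (1 - u)^m_j) (1 - u)^r_(j-1). Integrating out the mark u
  against \<rho>(du|s) turns the j-th summand into \<psi>_(m_j, r_(j-1))(s).
\<close>

lemma exp_neg_nonneg [simp]: "0 \<le> exp_neg a"
  by (simp add: exp_neg_def)

lemma exp_neg_le_1 [simp]: "exp_neg a \<le> 1"
  by (simp add: exp_neg_def)

lemma exp_neg_zero [simp]: "exp_neg 0 = 1"
  by (simp add: exp_neg_def)

lemma exp_neg_top [simp]: "exp_neg top = 0"
  by (simp add: exp_neg_def)

lemma exp_neg_ennreal: "0 \<le> x \<Longrightarrow> exp_neg (ennreal x) = exp (- x)"
  by (simp add: exp_neg_def)

lemma exp_neg_less_1: "a \<noteq> 0 \<Longrightarrow> exp_neg a < 1"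
  by (cases a rule: ennreal_cases) (auto simp: exp_neg_def)

lemma exp_neg_add: "exp_neg (a + b) = exp_neg a * exp_neg b"
  by (cases a rule: ennreal_cases; cases b rule: ennreal_cases)
     (auto simp: exp_neg_def exp_add[symmetric] simp flip: ennreal_plus)

lemma exp_neg_sum: "exp_neg (\<Sum>i\<in>I. f i) = (\<Prod>i\<in>I. exp_neg (f i))"
  by (induction I rule: infinite_finite_induct) (auto simp: exp_neg_add)

lemma exp_neg_of_nat_mult: "exp_neg (of_nat n * a) = exp_neg a ^ n"
  by (induction n) (auto simp: exp_neg_add distrib_right)

lemma exp_neg_antimono: "a \<le> b \<Longrightarrow> exp_neg b \<le> exp_neg a"
  by (cases a rule: ennreal_cases; cases b rule: ennreal_cases) (auto simp: exp_neg_def top_unique)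

lemma borel_measurable_exp_neg [measurable]: "exp_neg \<in> borel_measurable borel"
  unfolding exp_neg_def[abs_def] by measurable

lemma exp_neg_neglog1m: "0 \<le> u \<Longrightarrow> u \<le> 1 \<Longrightarrow> exp_neg (neglog1m u) = 1 - u"
  by (cases "u < 1") (auto simp: neglog1m_def exp_neg_def)

lemma borel_measurable_neglog1m [measurable]: "neglog1m \<in> borel_measurable borel"
  unfolding neglog1m_def[abs_def] by measurable

lemma tendsto_exp_neg:
  assumes X: "(X \<longlongrightarrow> L) F"
  shows "((\<lambda>n. exp_neg (X n)) \<longlongrightarrow> exp_neg L) F"
proof (cases L rule: ennreal_cases)
  case (real l)
  have "eventually (\<lambda>n. X n < \<infinity>) F"
    using X real by (intro order_tendstoD(2)) auto
  then have "eventually (\<lambda>n. exp (- enn2real (X n)) = exp_neg (X n)) F"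
    by eventually_elim (auto simp: exp_neg_def)
  moreover have "((\<lambda>n. exp (- enn2real (X n))) \<longlongrightarrow> exp (- l)) F"
    using X real by (intro tendsto_intros) auto
  ultimately show ?thesis
    using real by (simp add: exp_neg_ennreal tendsto_cong)
next
  case top
  show ?thesis unfolding top exp_neg_top
  proof (rule tendstoI)
    fix e :: real assume "0 < e"
    define M where "M = max 0 (- ln e)"
    have "0 \<le> M"
      by (simp add: M_def)
    have "eventually (\<lambda>n. ennreal M < X n) F"
      using X top by (intro order_tendstoD(1)) auto
    then show "eventually (\<lambda>n. dist (exp_neg (X n)) 0 < e) F"
    proof eventually_elim
      case (elim n)
      have "exp (- M) \<le> exp (ln e)"
        by (simp add: M_def)
      then have "exp (- M) \<le> e"
        using \<open>0 < e\<close> by simp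
      moreover have "exp_neg (X n) < exp (- M) \<or> X n = \<infinity>"
        using elim \<open>0 \<le> M\<close> by (cases "X n" rule: ennreal_cases) (auto simp: exp_neg_def ennreal_less_iff)
      ultimately show ?case
        using \<open>0 < e\<close> by auto
    qed
  qed
qed

section \<open>Laplace functional of a Poisson random measure\<close>

lemma poisson_generating_function_sums:
  fixes l q :: real
  shows "(\<lambda>n. q ^ n * (exp (- l) * l ^ n / fact n)) sums exp (- ((1 - q) * l))"
proof -
  have "(\<lambda>n. exp (- l) * ((q * l) ^ n /\<^sub>R fact n)) sums (exp (- l) * exp (q * l))"
    by (intro sums_mult exp_converges)
  then show ?thesis
    by (simp add: power_mult_distrib field_simps flip: exp_add)
qed

lemma nn_integral_simple_function_enum:
  assumes g: "simple_function M g" and e: "bij_betw e {..<n} (g ` space M)"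
  shows "(\<integral>\<^sup>+x. h (g x) \<partial>M) = (\<Sum>i<n. h (e i) * emeasure M {x\<in>space M. g x = e i})"
proof -
  have hg: "simple_function M (\<lambda>x. h (g x))"
    using simple_function_compose[OF g, of h] by (simp add: comp_def)
  then have "(\<integral>\<^sup>+x. h (g x) \<partial>M) = integral\<^sup>S M (\<lambda>x. h (g x))"
    by (rule nn_integral_eq_simple_integral)
  also have "\<dots> = (\<Sum>c\<in>g ` space M. h c * emeasure M {x\<in>space M. g x = c})"
    using hg g by (rule simple_function_partition) auto
  also have "\<dots> = (\<Sum>i<n. h (e i) * emeasure M {x\<in>space M. g x = e i})"
    using sum.reindex_bij_betw[OF e, of "\<lambda>c. h c * emeasure M {x\<in>space M. g x = c}"] by simp
  finally show ?thesis .
qed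

locale poisson_rm =
  fixes P :: "'o measure" and W :: "'w measure" and \<nu> :: "'w measure" and N :: "'o \<Rightarrow> 'w measure"
  assumes poisson_random_measure: "poisson_random_measure P W \<nu> N"
begin

sublocale prob_space P
  using poisson_random_measure by (simp add: poisson_random_measure_def)

lemma sets_intensity: "sets \<nu> = sets W"
  using poisson_random_measure by (simp add: poisson_random_measure_def)

lemma sets_N: "\<omega> \<in> space P \<Longrightarrow> sets (N \<omega>) = sets W"
  using poisson_random_measure by (simp add: poisson_random_measure_def)

lemma measurable_count: "A \<in> sets W \<Longrightarrow> (\<lambda>\<omega>. emeasure (N \<omega>) A) \<in> borel_measurable P"
  using poisson_random_measure by (simp add: poisson_random_measure_def)

lemma prob_count_eq:
  "A \<in> sets W \<Longrightarrow> emeasure \<nu> A < \<infinity> \<Longrightarrow>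
    \<P>(\<omega> in P. emeasure (N \<omega>) A = of_nat n)
      = exp (- enn2real (emeasure \<nu> A)) * enn2real (emeasure \<nu> A) ^ n / fact n"
  using poisson_random_measure by (simp add: poisson_random_measure_def)

lemma AE_count_infinite: "A \<in> sets W \<Longrightarrow> emeasure \<nu> A = \<infinity> \<Longrightarrow> AE \<omega> in P. emeasure (N \<omega>) A = \<infinity>"
  using poisson_random_measure by (simp add: poisson_random_measure_def)

lemma indep_vars_counts:
  fixes A :: "nat \<Rightarrow> 'w set"
  shows "finite I \<Longrightarrow> A ` I \<subseteq> sets W \<Longrightarrow> disjoint_family_on A I \<Longrightarrow>
    indep_vars (\<lambda>_. borel) (\<lambda>i \<omega>. emeasure (N \<omega>) (A i)) I"
  using poisson_random_measure by (simp add: poisson_random_measure_def)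

lemma AE_count_nat:
  assumes A: "A \<in> sets W" and fin: "emeasure \<nu> A < \<infinity>"
  shows "AE \<omega> in P. \<exists>n::nat. emeasure (N \<omega>) A = of_nat n"
proof -
  have "(\<lambda>n. \<P>(\<omega> in P. emeasure (N \<omega>) A = of_nat n)) sums \<P>(\<omega> in P. \<exists>n::nat. emeasure (N \<omega>) A = of_nat n)"
    using measurable_count[OF A] by (intro prob_sums) auto
  moreover have "(\<lambda>n. \<P>(\<omega> in P. emeasure (N \<omega>) A = of_nat n)) sums 1"
    using poisson_generating_function_sums[of 1 "enn2real (emeasure \<nu> A)"] by (simp add: prob_count_eq[OF A fin])
  ultimately have "\<P>(\<omega> in P. \<exists>n::nat. emeasure (N \<omega>) A = of_nat n) = 1"
    using sums_unique2 by blast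
  then show ?thesis
    using measurable_count[OF A] by (subst prob_Collect_eq_1[symmetric]) auto
qed

lemma nn_integral_count:
  assumes A: "A \<in> sets W" and fin: "emeasure \<nu> A < \<infinity>"
  shows "(\<integral>\<^sup>+\<omega>. f (emeasure (N \<omega>) A) \<partial>P)
    = (\<Sum>n. f (of_nat n) * ennreal (exp (- enn2real (emeasure \<nu> A)) * enn2real (emeasure \<nu> A) ^ n / fact n))"
proof -
  let ?E = "\<lambda>n. {\<omega>\<in>space P. emeasure (N \<omega>) A = of_nat n}"
  have "(\<integral>\<^sup>+\<omega>. f (emeasure (N \<omega>) A) \<partial>P) = (\<integral>\<^sup>+\<omega>. (\<Sum>n. f (of_nat n) * indicator (?E n) \<omega>) \<partial>P)"
  proof (intro nn_integral_cong_AE)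
    show "AE \<omega> in P. f (emeasure (N \<omega>) A) = (\<Sum>n. f (of_nat n) * indicator (?E n) \<omega>)"
      using AE_count_nat[OF A fin]
    proof (rule AE_mp[OF _ AE_I2], safe)
      fix \<omega> n assume "\<omega> \<in> space P" "emeasure (N \<omega>) A = of_nat n"
      moreover have "disjoint_family ?E"
        by (auto simp: disjoint_family_on_def)
      ultimately show "f (emeasure (N \<omega>) A) = (\<Sum>n. f (of_nat n) * indicator (?E n) \<omega>)"
        by (subst suminf_cmult_indicator[where i=n]) auto
    qed
  qed
  also have "\<dots> = (\<Sum>n. f (of_nat n) * emeasure P (?E n))"
    using measurable_count[OF A] by (simp add: nn_integral_suminf nn_integral_cmult_indicator)
  also have "\<dots> = (\<Sum>n. f (of_nat n) * ennreal (exp (- enn2real (emeasure \<nu> A)) * enn2real (emeasure \<nu> A) ^ n / fact n))"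
    by (simp add: emeasure_eq_measure prob_count_eq[OF A fin])
  finally show ?thesis .
qed

lemma laplace_count:
  assumes A: "A \<in> sets W"
  shows "(\<integral>\<omega>. exp_neg (c * emeasure (N \<omega>) A) \<partial>P) = exp_neg (ennreal (1 - exp_neg c) * emeasure \<nu> A)"
proof (cases "emeasure \<nu> A = \<infinity>")
  note [measurable] = measurable_count[OF A]
  case True
  have "(\<integral>\<omega>. exp_neg (c * emeasure (N \<omega>) A) \<partial>P) = (\<integral>\<omega>. exp_neg (c * \<infinity>) \<partial>P)"
    using AE_count_infinite[OF A True] by (intro integral_cong_AE) auto
  also have "\<dots> = exp_neg (ennreal (1 - exp_neg c) * emeasure \<nu> A)"
    using exp_neg_less_1[of c] True by (cases "c = 0") (auto simp: prob_space ennreal_mult_eq_top_iff)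
  finally show ?thesis .
next
  case False
  define l where "l = enn2real (emeasure \<nu> A)"
  define q where "q = exp_neg c"
  have l: "0 \<le> l" "emeasure \<nu> A = ennreal l"
    using False by (auto simp: l_def ennreal_enn2real top.not_eq_extremum)
  have q: "0 \<le> q"
    by (simp add: q_def)
  have "(\<integral>\<^sup>+\<omega>. ennreal (exp_neg (c * emeasure (N \<omega>) A)) \<partial>P)
      = (\<Sum>n. ennreal (q ^ n) * ennreal (exp (- l) * l ^ n / fact n))"
    using nn_integral_count[OF A, of "\<lambda>x. ennreal (exp_neg (c * x))"] False
    by (simp add: l_def q_def mult.commute[of c] exp_neg_of_nat_mult top.not_eq_extremum)
  also have "\<dots> = (\<Sum>n. ennreal (q ^ n * (exp (- l) * l ^ n / fact n)))"
    using q l by (simp add: ennreal_mult'[symmetric])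
  also have "\<dots> = ennreal (exp (- ((1 - q) * l)))"
    using poisson_generating_function_sums[of q l] q l by (subst suminf_ennreal2) (auto simp: sums_iff)
  finally have "(\<integral>\<omega>. exp_neg (c * emeasure (N \<omega>) A) \<partial>P) = exp (- ((1 - q) * l))"
    using measurable_count[OF A] by (subst integral_eq_nn_integral) auto
  then show ?thesis
    using q l by (simp add: q_def exp_neg_ennreal flip: ennreal_mult)
qed

lemma laplace_simple:
  assumes g: "simple_function W g"
  shows "(\<lambda>\<omega>. \<integral>\<^sup>+w. g w \<partial>N \<omega>) \<in> borel_measurable P"
    and "(\<integral>\<omega>. exp_neg (\<integral>\<^sup>+w. g w \<partial>N \<omega>) \<partial>P) = exp_neg (\<integral>\<^sup>+w. ennreal (1 - exp_neg (g w)) \<partial>\<nu>)"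
proof -
  define n where "n = card (g ` space W)"
  have "finite (g ` space W)"
    using g by (rule simple_functionD)
  \<comment> \<open>Independence of counts is only postulated for \<open>nat\<close>-indexed families of sets.\<close>
  then obtain e where e: "bij_betw e {..<n} (g ` space W)"
    unfolding n_def lessThan_atLeast0 by (metis ex_bij_betw_nat_finite)
  define B where "B i = {w\<in>space W. g w = e i}" for i
  have B: "B i \<in> sets W" for i
    using g by (simp add: B_def simple_functionD)
  note [measurable] = measurable_count[OF B]
  have disj: "disjoint_family_on B {..<n}"
    using e by (auto simp: disjoint_family_on_def B_def bij_betw_def inj_on_def)
  have integral_split: "(\<integral>\<^sup>+w. h (g w) \<partial>M) = (\<Sum>i<n. h (e i) * emeasure M (B i))"
    if M: "sets M = sets W" for M :: "'w measure" and h
  proof -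
    have "space M = space W"
      using M by (rule sets_eq_imp_space_eq)
    moreover have "simple_function M g"
      using g M \<open>space M = space W\<close> simple_function_cong_algebra[of M W] by blast
    ultimately show ?thesis
      using nn_integral_simple_function_enum[of M g e n h] e by (simp add: B_def)
  qed
  have integral_N: "(\<integral>\<^sup>+w. g w \<partial>N \<omega>) = (\<Sum>i<n. e i * emeasure (N \<omega>) (B i))" if "\<omega> \<in> space P" for \<omega>
    using integral_split[OF sets_N[OF that], of id] by simp
  show "(\<lambda>\<omega>. \<integral>\<^sup>+w. g w \<partial>N \<omega>) \<in> borel_measurable P"
    by (subst measurable_cong[OF integral_N]) auto
  have indep: "indep_vars (\<lambda>_. borel) (\<lambda>i \<omega>. exp_neg (e i * emeasure (N \<omega>) (B i))) {..<n}"
    using indep_vars_counts[of "{..<n}" B] B disj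
    by (intro indep_vars_compose2[where Y="\<lambda>i x. exp_neg (e i * x)"]) auto
  have "(\<integral>\<omega>. exp_neg (\<integral>\<^sup>+w. g w \<partial>N \<omega>) \<partial>P) = (\<integral>\<omega>. (\<Prod>i<n. exp_neg (e i * emeasure (N \<omega>) (B i))) \<partial>P)"
    by (intro Bochner_Integration.integral_cong) (simp_all add: integral_N exp_neg_sum)
  also have "\<dots> = (\<Prod>i<n. \<integral>\<omega>. exp_neg (e i * emeasure (N \<omega>) (B i)) \<partial>P)"
    using indep by (intro indep_vars_lebesgue_integral integrable_const_bound[where B=1]) auto
  also have "\<dots> = exp_neg (\<Sum>i<n. ennreal (1 - exp_neg (e i)) * emeasure \<nu> (B i))"
    by (simp add: laplace_count[OF B] exp_neg_sum)
  also have "\<dots> = exp_neg (\<integral>\<^sup>+w. ennreal (1 - exp_neg (g w)) \<partial>\<nu>)"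
    using integral_split[OF sets_intensity, of "\<lambda>c. ennreal (1 - exp_neg c)"] by simp
  finally show "(\<integral>\<omega>. exp_neg (\<integral>\<^sup>+w. g w \<partial>N \<omega>) \<partial>P) = exp_neg (\<integral>\<^sup>+w. ennreal (1 - exp_neg (g w)) \<partial>\<nu>)" .
qed

lemma laplace_functional:
  assumes g: "g \<in> borel_measurable W"
  shows "(\<integral>\<omega>. exp_neg (\<integral>\<^sup>+w. g w \<partial>N \<omega>) \<partial>P) = exp_neg (\<integral>\<^sup>+w. ennreal (1 - exp_neg (g w)) \<partial>\<nu>)"
proof -
  obtain f where f: "\<And>i. simple_function W (f i)" "incseq f" "\<And>x. (SUP i. f i x) = g x"
    using borel_measurable_implies_simple_function_sequence'[OF g] by metis
  have f_borel [measurable]: "f i \<in> borel_measurable W" for i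
    using f(1) by (rule borel_measurable_simple_function)
  have f_mono: "f i x \<le> f j x" if "i \<le> j" for i j x
    using f(2) that by (auto simp: incseq_def le_fun_def)
  have integral_N: "(\<integral>\<^sup>+w. g w \<partial>N \<omega>) = (SUP i. \<integral>\<^sup>+w. f i w \<partial>N \<omega>)" if "\<omega> \<in> space P" for \<omega>
    unfolding f(3)[symmetric] using f(2) f_borel
    by (intro nn_integral_monotone_convergence_SUP)
       (auto simp: SUP_apply[symmetric] measurable_cong_sets[OF sets_N[OF that] refl])
  note [measurable] = laplace_simple(1)[OF f(1)]
  have "(\<lambda>\<omega>. \<integral>\<^sup>+w. g w \<partial>N \<omega>) \<in> borel_measurable P"
    by (subst measurable_cong[OF integral_N]) auto
  then have lim_N: "(\<lambda>i. \<integral>\<omega>. exp_neg (\<integral>\<^sup>+w. f i w \<partial>N \<omega>) \<partial>P)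
      \<longlonglongrightarrow> (\<integral>\<omega>. exp_neg (\<integral>\<^sup>+w. g w \<partial>N \<omega>) \<partial>P)"
    by (intro integral_dominated_convergence[where w="\<lambda>_. 1"] AE_I2)
       (auto simp: integral_N intro!: tendsto_exp_neg LIMSEQ_SUP nn_integral_mono f_mono incseq_SucI)
  have inc: "incseq (\<lambda>i. ennreal (1 - exp_neg (f i w)))" for w
    by (auto simp: incseq_def intro!: ennreal_leI exp_neg_antimono f_mono)
  have "(\<lambda>i. ennreal (1 - exp_neg (f i w))) \<longlonglongrightarrow> ennreal (1 - exp_neg (g w))" for w
    unfolding f(3)[symmetric]
    by (intro tendsto_ennrealI tendsto_diff tendsto_const tendsto_exp_neg LIMSEQ_SUP)
       (auto simp: incseq_def intro!: f_mono)
  then have "ennreal (1 - exp_neg (g w)) = (SUP i. ennreal (1 - exp_neg (f i w)))" for w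
    using LIMSEQ_SUP[OF inc] by (rule LIMSEQ_unique)
  moreover have "(\<lambda>w. ennreal (1 - exp_neg (f i w))) \<in> borel_measurable \<nu>" for i
    unfolding measurable_cong_sets[OF sets_intensity refl] by measurable
  ultimately have "(\<integral>\<^sup>+w. ennreal (1 - exp_neg (g w)) \<partial>\<nu>) = (SUP i. \<integral>\<^sup>+w. ennreal (1 - exp_neg (f i w)) \<partial>\<nu>)"
    using inc by (simp add: SUP_apply[symmetric] nn_integral_monotone_convergence_SUP incseq_def le_fun_def)
  then have lim_nu: "(\<lambda>i. exp_neg (\<integral>\<^sup>+w. ennreal (1 - exp_neg (f i w)) \<partial>\<nu>))
      \<longlonglongrightarrow> exp_neg (\<integral>\<^sup>+w. ennreal (1 - exp_neg (g w)) \<partial>\<nu>)"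
    using inc by (auto simp: incseq_def intro!: tendsto_exp_neg LIMSEQ_SUP nn_integral_mono)
  show ?thesis
    using lim_N lim_nu laplace_simple(2)[OF f(1)] by (auto intro: LIMSEQ_unique)
qed

end

lemma measurable_fst_borel [measurable]:
  "fst \<in> (borel :: ('a::second_countable_topology \<times> 'b::second_countable_topology) measure) \<rightarrow>\<^sub>M borel"
  by (intro borel_measurable_continuous_onI continuous_intros)

lemma measurable_snd_borel [measurable]:
  "snd \<in> (borel :: ('a::second_countable_topology \<times> 'b::second_countable_topology) measure) \<rightarrow>\<^sub>M borel"
  by (intro borel_measurable_continuous_onI continuous_intros)

lemma Times_in_borel:
  fixes A :: "'a::second_countable_topology set" and B :: "'b::second_countable_topology set"
  shows "A \<in> sets borel \<Longrightarrow> B \<in> sets borel \<Longrightarrow> A \<times> B \<in> sets borel"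
  by (metis borel_prod pair_measureI)

lemma space_Wspace: "space Wspace = {0..1} \<times> {0..} \<times> UNIV"
  by (simp add: Wspace_def space_restrict_space)

lemma sets_Wspace_iff:
  "A \<in> sets (Wspace :: (real \<times> real \<times> 'x::polish_space) measure) \<longleftrightarrow>
    A \<subseteq> {0..1} \<times> {0..} \<times> UNIV \<and> A \<in> sets borel"
proof -
  have "{0..1::real} \<times> {0::real..} \<times> (UNIV :: 'x set) \<in> sets borel"
    by (intro Times_in_borel) auto
  then show ?thesis
    unfolding Wspace_def by (subst sets_restrict_space_iff) auto
qed

lemma measurable_Wspace [measurable (raw)]: "f \<in> borel \<rightarrow>\<^sub>M M \<Longrightarrow> f \<in> Wspace \<rightarrow>\<^sub>M M"
  unfolding Wspace_def by (rule measurable_restrict_space1)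

lemma measurable_fst_Wspace [measurable]:
  "fst \<in> (Wspace :: (real \<times> real \<times> 'x::polish_space) measure) \<rightarrow>\<^sub>M restrict_space borel {0..1}"
  unfolding Wspace_def
  by (intro measurable_restrict_space2 measurable_restrict_space1) (auto simp: space_restrict_space)

section \<open>Telescoping the product of survival functions\<close>

lemma le_of_decreasing_steps:
  fixes t :: "nat \<Rightarrow> 'a::linorder"
  assumes dec: "\<And>j. 1 \<le> j \<Longrightarrow> j < K \<Longrightarrow> t (Suc j) < t j" and "1 \<le> i" "i \<le> K"
  shows "t K \<le> t i"
  using \<open>i \<le> K\<close>
proof (induction K rule: dec_induct)
  case (step n)
  then show ?case
    using dec[of n] \<open>1 \<le> i\<close> by auto
qed simp

lemma one_minus_prod_telescoping:
  fixes x s :: real and t :: "nat \<Rightarrow> real" and m :: "nat \<Rightarrow> nat"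
  assumes dec: "\<And>j. 1 \<le> j \<Longrightarrow> j < K \<Longrightarrow> t (Suc j) < t j"
  shows "1 - (\<Prod>j=1..K. if s < t j then x ^ m j else 1)
       = (\<Sum>j=1..K. if s < t j then (1 - x ^ m j) * x ^ (\<Sum>l=1..j-1. m l) else 0)"
  using dec
proof (induction K)
  case (Suc K)
  have IH: "1 - (\<Prod>j=1..K. if s < t j then x ^ m j else 1)
       = (\<Sum>j=1..K. if s < t j then (1 - x ^ m j) * x ^ (\<Sum>l=1..j-1. m l) else 0)"
    using Suc by auto
  show ?case
  proof (cases "s < t (Suc K)")
    case True
    have "s < t j" if "j \<in> {1..K}" for j
      using le_of_decreasing_steps[of "Suc K" t j] Suc.prems that True by auto
    then have "(\<Prod>j=1..K. if s < t j then x ^ m j else 1) = x ^ (\<Sum>l=1..K. m l)"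
      by (simp add: power_sum)
    then show ?thesis
      using True IH by (simp add: algebra_simps power_add)
  next
    case False
    then show ?thesis
      using IH by simp
  qed
qed simp

lemma one_minus_exp_neg_hazard:
  fixes w :: "real \<times> real \<times> 'x" and t :: "nat \<Rightarrow> real" and m :: "nat \<Rightarrow> nat"
  assumes u: "0 \<le> fst w" "fst w \<le> 1" and dec: "\<And>j. 1 \<le> j \<Longrightarrow> j < k \<Longrightarrow> t (Suc j) < t j"
  shows "ennreal (1 - exp_neg (\<Sum>j=1..k. of_nat (m j) * (indicator {w. fst (snd w) < t j} w * neglog1m (fst w))))
    = (\<Sum>j=1..k. indicator {w. fst (snd w) < t j} w *
        ennreal ((1 - (1 - fst w) ^ m j) * (1 - fst w) ^ (\<Sum>l=1..j-1. m l)))"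
proof -
  have "exp_neg (\<Sum>j=1..k. of_nat (m j) * (indicator {w. fst (snd w) < t j} w * neglog1m (fst w)))
      = (\<Prod>j=1..k. exp_neg (indicator {w. fst (snd w) < t j} w * neglog1m (fst w)) ^ m j)"
    by (simp add: exp_neg_sum exp_neg_of_nat_mult)
  also have "\<dots> = (\<Prod>j=1..k. if fst (snd w) < t j then (1 - fst w) ^ m j else 1)"
    using u by (intro prod.cong) (auto simp: exp_neg_neglog1m indicator_def)
  finally have "1 - exp_neg (\<Sum>j=1..k. of_nat (m j) * (indicator {w. fst (snd w) < t j} w * neglog1m (fst w)))
      = (\<Sum>j=1..k. if fst (snd w) < t j then (1 - (1 - fst w) ^ m j) * (1 - fst w) ^ (\<Sum>l=1..j-1. m l) else 0)"
    using one_minus_prod_telescoping[of k t "fst (snd w)" "1 - fst w" m, OF dec] by simp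
  moreover have "0 \<le> (if fst (snd w) < t j then (1 - (1 - fst w) ^ m j) * (1 - fst w) ^ (\<Sum>l=1..j-1. m l) else 0)"
    for j
    using u by (simp add: power_le_one)
  ultimately have "ennreal (1 - exp_neg (\<Sum>j=1..k. of_nat (m j) * (indicator {w. fst (snd w) < t j} w * neglog1m (fst w))))
      = (\<Sum>j=1..k. ennreal (if fst (snd w) < t j then (1 - (1 - fst w) ^ m j) * (1 - fst w) ^ (\<Sum>l=1..j-1. m l) else 0))"
    by (simp add: sum_ennreal)
  also have "\<dots> = (\<Sum>j=1..k. indicator {w. fst (snd w) < t j} w *
      ennreal ((1 - (1 - fst w) ^ m j) * (1 - fst w) ^ (\<Sum>l=1..j-1. m l)))"
    by (intro sum.cong refl) (simp add: indicator_def)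
  finally show ?thesis .
qed

lemma prod_surv_minus_power:
  fixes M :: "(real \<times> real \<times> 'x::polish_space) measure"
  assumes M: "sets M = sets Wspace"
  shows "(\<Prod>j\<in>J. surv_minus M (t j) ^ m j)
    = exp_neg (\<integral>\<^sup>+w. (\<Sum>j\<in>J. of_nat (m j) * (indicator {w. fst (snd w) < t j} w * neglog1m (fst w))) \<partial>M)"
proof -
  have "(\<lambda>w. indicator {w. fst (snd w) < t j} w * neglog1m (fst w)) \<in> borel_measurable M" for j
    unfolding measurable_cong_sets[OF M refl] by measurable
  then show ?thesis
    by (simp add: nn_integral_sum nn_integral_cmult surv_minus_def exp_neg_sum exp_neg_of_nat_mult)
qed

section \<open>Intensities given by a mark kernel\<close>

lemma nn_integral_marginal_s:
  assumes L: "sets L = sets borel" and G: "G \<in> borel_measurable borel"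
  shows "(\<integral>\<^sup>+s. G s \<partial>marginal_s L) = (\<integral>\<^sup>+sx. G (fst sx) \<partial>L)"
  unfolding marginal_s_def using G by (intro nn_integral_distr) (simp_all add: measurable_cong_sets[OF L refl])

locale kernel_intensity =
  fixes \<Lambda>0 :: "(real \<times> 'x::polish_space) measure" and \<rho> :: "real \<Rightarrow> real measure"
    and \<nu> :: "(real \<times> real \<times> 'x) measure"
  assumes sets_rho: "\<And>s. sets (\<rho> s) = sets (restrict_space borel {0..1::real})"
    and emeasure_rho_measurable: "\<And>A. A \<in> sets (restrict_space borel {0..1::real}) \<Longrightarrow>
      (\<lambda>s. emeasure (\<rho> s) A) \<in> borel_measurable borel"
    and sets_Lambda0: "sets \<Lambda>0 = sets borel"
    and sets_nu: "sets \<nu> = sets (Wspace :: (real \<times> real \<times> 'x) measure)"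
    and emeasure_nu: "\<And>A. A \<in> sets (Wspace :: (real \<times> real \<times> 'x) measure) \<Longrightarrow>
      emeasure \<nu> A = (\<integral>\<^sup>+ sx. (\<integral>\<^sup>+ u. indicator A (u, fst sx, snd sx) \<partial>(\<rho> (fst sx))) \<partial>\<Lambda>0)"
begin

lemma space_rho: "space (\<rho> s) = {0..1}"
  using sets_eq_imp_space_eq[OF sets_rho[of s]] by (simp add: space_restrict_space)

lemma space_nu: "space \<nu> = {0..1} \<times> {0..} \<times> UNIV"
  using sets_eq_imp_space_eq[OF sets_nu] by (simp add: space_Wspace)

lemma measurable_rho:
  "(F :: real \<Rightarrow> ennreal) \<in> borel_measurable (restrict_space borel {0..1}) \<Longrightarrow>
    F \<in> borel_measurable (\<rho> s)"
  by (simp add: measurable_cong_sets[OF sets_rho refl])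

lemma measurable_mark_integrand:
  fixes F :: "real \<Rightarrow> ennreal"
  assumes [measurable]: "F \<in> borel_measurable (restrict_space borel {0..1})"
  shows "(\<lambda>w. indicator {w. fst (snd w) < t} w * F (fst w)) \<in> borel_measurable \<nu>"
  unfolding measurable_cong_sets[OF sets_nu refl] by measurable

lemma measurable_Lambda0_integrand:
  fixes G :: "real \<Rightarrow> ennreal"
  assumes [measurable]: "G \<in> borel_measurable borel"
  shows "(\<lambda>sx. indicator {0..<t} (fst sx) * G (fst sx)) \<in> borel_measurable \<Lambda>0"
  unfolding measurable_cong_sets[OF sets_Lambda0 refl] by measurable

text \<open>
  Only integrands of the form I{s < t} H(u) are needed. For them the inner integral is
  measurable by the kernel hypothesis on \<rho>, which avoids a monotone class argument over
  the measurable sets of W.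
\<close>

definition disintegrates :: "real \<Rightarrow> (real \<Rightarrow> ennreal) \<Rightarrow> bool" where
  "disintegrates t H \<longleftrightarrow> (\<lambda>s. \<integral>\<^sup>+u. H u \<partial>\<rho> s) \<in> borel_measurable borel \<and>
    (\<integral>\<^sup>+w. indicator {w. fst (snd w) < t} w * H (fst w) \<partial>\<nu>)
      = (\<integral>\<^sup>+sx. indicator {0..<t} (fst sx) * (\<integral>\<^sup>+u. H u \<partial>\<rho> (fst sx)) \<partial>\<Lambda>0)"

lemma disintegrates_indicator:
  assumes A: "A \<in> sets (restrict_space borel {0..1})"
  shows "disintegrates t (indicator A)"
proof -
  have "A \<subseteq> {0..1}" "A \<in> sets borel"
    using A sets_restrict_space_iff[of "{0..1::real}" borel A] by auto
  define D where "D = A \<times> {0..<t} \<times> (UNIV :: 'x set)"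
  then have D: "D \<in> sets (Wspace :: (real \<times> real \<times> 'x) measure)"
    using \<open>A \<subseteq> {0..1}\<close> \<open>A \<in> sets borel\<close> unfolding sets_Wspace_iff by (auto intro!: Times_in_borel)
  have "(\<integral>\<^sup>+w. indicator {w. fst (snd w) < t} w * indicator A (fst w) \<partial>\<nu>) = (\<integral>\<^sup>+w. indicator D w \<partial>\<nu>)"
    by (intro nn_integral_cong) (auto simp: space_nu D_def indicator_def)
  also have "\<dots> = emeasure \<nu> D"
    using D sets_nu by simp
  also have "\<dots> = (\<integral>\<^sup>+sx. indicator {0..<t} (fst sx) * emeasure (\<rho> (fst sx)) A \<partial>\<Lambda>0)"
    unfolding emeasure_nu[OF D] using A sets_rho
    by (intro nn_integral_cong) (auto simp: D_def indicator_def nn_integral_cmult_indicator[symmetric] intro!: nn_integral_cong)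
  finally show ?thesis
    using emeasure_rho_measurable[OF A] A sets_rho by (simp add: disintegrates_def)
qed

lemma disintegrates_cong:
  assumes "\<And>u. u \<in> {0..1} \<Longrightarrow> F u = G u" and "disintegrates t G"
  shows "disintegrates t F"
proof -
  have "(\<integral>\<^sup>+u. F u \<partial>\<rho> s) = (\<integral>\<^sup>+u. G u \<partial>\<rho> s)" for s
    using assms(1) by (intro nn_integral_cong) (auto simp: space_rho)
  moreover have "(\<integral>\<^sup>+w. indicator {w. fst (snd w) < t} w * F (fst w) \<partial>\<nu>)
      = (\<integral>\<^sup>+w. indicator {w. fst (snd w) < t} w * G (fst w) \<partial>\<nu>)"
    using assms(1) by (intro nn_integral_cong) (auto simp: space_nu)
  ultimately show ?thesis
    using assms(2) by (simp add: disintegrates_def)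
qed

lemma disintegrates_cmult:
  assumes F: "F \<in> borel_measurable (restrict_space borel {0..1})" and "disintegrates t F"
  shows "disintegrates t (\<lambda>u. c * F u)"
proof -
  have K: "(\<integral>\<^sup>+u. c * F u \<partial>\<rho> s) = c * (\<integral>\<^sup>+u. F u \<partial>\<rho> s)" for s
    using measurable_rho[OF F] by (rule nn_integral_cmult)
  have F_meas: "(\<lambda>s. \<integral>\<^sup>+u. F u \<partial>\<rho> s) \<in> borel_measurable borel"
    and F_eq: "(\<integral>\<^sup>+w. indicator {w. fst (snd w) < t} w * F (fst w) \<partial>\<nu>)
      = (\<integral>\<^sup>+sx. indicator {0..<t} (fst sx) * (\<integral>\<^sup>+u. F u \<partial>\<rho> (fst sx)) \<partial>\<Lambda>0)"
    using \<open>disintegrates t F\<close> by (simp_all add: disintegrates_def)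
  have "(\<integral>\<^sup>+w. indicator {w. fst (snd w) < t} w * (c * F (fst w)) \<partial>\<nu>)
      = (\<integral>\<^sup>+w. c * (indicator {w. fst (snd w) < t} w * F (fst w)) \<partial>\<nu>)"
    by (simp only: mult.left_commute)
  also have "\<dots> = c * (\<integral>\<^sup>+sx. indicator {0..<t} (fst sx) * (\<integral>\<^sup>+u. F u \<partial>\<rho> (fst sx)) \<partial>\<Lambda>0)"
    using measurable_mark_integrand[OF F] by (simp add: nn_integral_cmult F_eq)
  also have "\<dots> = (\<integral>\<^sup>+sx. c * (indicator {0..<t} (fst sx) * (\<integral>\<^sup>+u. F u \<partial>\<rho> (fst sx))) \<partial>\<Lambda>0)"
    using measurable_Lambda0_integrand[OF F_meas] by (rule nn_integral_cmult[symmetric])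
  also have "\<dots> = (\<integral>\<^sup>+sx. indicator {0..<t} (fst sx) * (\<integral>\<^sup>+u. c * F u \<partial>\<rho> (fst sx)) \<partial>\<Lambda>0)"
    by (simp only: K mult.left_commute)
  finally show ?thesis
    using F_meas by (simp add: disintegrates_def K)
qed

lemma disintegrates_add:
  assumes F: "F \<in> borel_measurable (restrict_space borel {0..1})" and "disintegrates t F"
    and G: "G \<in> borel_measurable (restrict_space borel {0..1})" and "disintegrates t G"
  shows "disintegrates t (\<lambda>u. F u + G u)"
proof -
  have K: "(\<integral>\<^sup>+u. F u + G u \<partial>\<rho> s) = (\<integral>\<^sup>+u. F u \<partial>\<rho> s) + (\<integral>\<^sup>+u. G u \<partial>\<rho> s)" for s
    using measurable_rho[OF F] measurable_rho[OF G] by (rule nn_integral_add)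
  have meas: "(\<lambda>s. \<integral>\<^sup>+u. F u \<partial>\<rho> s) \<in> borel_measurable borel"
    "(\<lambda>s. \<integral>\<^sup>+u. G u \<partial>\<rho> s) \<in> borel_measurable borel"
    using \<open>disintegrates t F\<close> \<open>disintegrates t G\<close> by (simp_all add: disintegrates_def)
  have "(\<integral>\<^sup>+w. indicator {w. fst (snd w) < t} w * (F (fst w) + G (fst w)) \<partial>\<nu>)
      = (\<integral>\<^sup>+w. indicator {w. fst (snd w) < t} w * F (fst w) \<partial>\<nu>)
        + (\<integral>\<^sup>+w. indicator {w. fst (snd w) < t} w * G (fst w) \<partial>\<nu>)"
    using measurable_mark_integrand[OF F] measurable_mark_integrand[OF G]
    by (subst nn_integral_add[symmetric]) (auto simp: distrib_left)
  also have "\<dots> = (\<integral>\<^sup>+sx. indicator {0..<t} (fst sx) * (\<integral>\<^sup>+u. F u \<partial>\<rho> (fst sx)) \<partial>\<Lambda>0)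
      + (\<integral>\<^sup>+sx. indicator {0..<t} (fst sx) * (\<integral>\<^sup>+u. G u \<partial>\<rho> (fst sx)) \<partial>\<Lambda>0)"
    using \<open>disintegrates t F\<close> \<open>disintegrates t G\<close> by (simp add: disintegrates_def)
  also have "\<dots> = (\<integral>\<^sup>+sx. indicator {0..<t} (fst sx) * (\<integral>\<^sup>+u. F u + G u \<partial>\<rho> (fst sx)) \<partial>\<Lambda>0)"
    unfolding K distrib_left
    using measurable_Lambda0_integrand[OF meas(1)] measurable_Lambda0_integrand[OF meas(2)]
    by (rule nn_integral_add[symmetric])
  finally show ?thesis
    using meas by (simp add: disintegrates_def K)
qed

lemma disintegrates_SUP:
  assumes U: "\<And>i. U i \<in> borel_measurable (restrict_space borel {0..1})" and "incseq U"
    and "\<And>i. disintegrates t (U i)"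
  shows "disintegrates t (SUP i. U i)"
proof -
  have mono: "U i u \<le> U j u" if "i \<le> j" for i j u
    using \<open>incseq U\<close> that by (auto simp: incseq_def le_fun_def)
  have K: "(\<integral>\<^sup>+u. (SUP i. U i) u \<partial>\<rho> s) = (SUP i. \<integral>\<^sup>+u. U i u \<partial>\<rho> s)" for s
    unfolding SUP_apply using measurable_rho[OF U] \<open>incseq U\<close>
    by (intro nn_integral_monotone_convergence_SUP) auto
  have meas: "(\<lambda>s. \<integral>\<^sup>+u. U i u \<partial>\<rho> s) \<in> borel_measurable borel" for i
    using assms(3) by (simp add: disintegrates_def)
  have "(\<integral>\<^sup>+w. indicator {w. fst (snd w) < t} w * (SUP i. U i) (fst w) \<partial>\<nu>)
      = (\<integral>\<^sup>+w. (SUP i. indicator {w. fst (snd w) < t} w * U i (fst w)) \<partial>\<nu>)"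
    by (simp add: SUP_mult_left_ennreal image_image)
  also have "\<dots> = (SUP i. \<integral>\<^sup>+w. indicator {w. fst (snd w) < t} w * U i (fst w) \<partial>\<nu>)"
    using measurable_mark_integrand[OF U]
    by (intro nn_integral_monotone_convergence_SUP) (auto simp: incseq_def le_fun_def intro!: mult_left_mono mono)
  also have "\<dots> = (\<integral>\<^sup>+sx. (SUP i. indicator {0..<t} (fst sx) * (\<integral>\<^sup>+u. U i u \<partial>\<rho> (fst sx))) \<partial>\<Lambda>0)"
    using assms(3) measurable_Lambda0_integrand[OF meas]
    by (subst nn_integral_monotone_convergence_SUP)
       (auto simp: disintegrates_def incseq_def le_fun_def intro!: mult_left_mono nn_integral_mono mono)
  also have "\<dots> = (\<integral>\<^sup>+sx. indicator {0..<t} (fst sx) * (\<integral>\<^sup>+u. (SUP i. U i) u \<partial>\<rho> (fst sx)) \<partial>\<Lambda>0)"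
    by (simp only: K SUP_mult_left_ennreal)
  finally have "(\<integral>\<^sup>+w. indicator {w. fst (snd w) < t} w * (SUP i. U i) (fst w) \<partial>\<nu>)
      = (\<integral>\<^sup>+sx. indicator {0..<t} (fst sx) * (\<integral>\<^sup>+u. (SUP i. U i) u \<partial>\<rho> (fst sx)) \<partial>\<Lambda>0)" .
  moreover have "(\<lambda>s. \<integral>\<^sup>+u. (SUP i. U i) u \<partial>\<rho> s) \<in> borel_measurable borel"
    unfolding K using meas by (intro borel_measurable_SUP) auto
  ultimately show ?thesis
    unfolding disintegrates_def by blast
qed

lemma disintegrates:
  assumes "H \<in> borel_measurable (restrict_space borel {0..1})"
  shows "disintegrates t H"
  using assms
proof (induction H rule: borel_measurable_induct)
  case (cong f g)
  then have "\<And>u. u \<in> {0..1} \<Longrightarrow> f u = g u"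
    by (simp add: space_restrict_space)
  with cong show ?case
    by (blast intro: disintegrates_cong)
next
  case (set A)
  then show ?case
    by (rule disintegrates_indicator)
next
  case (mult u c)
  then show ?case
    by (blast intro: disintegrates_cmult)
next
  case (add u v)
  then show ?case
    by (blast intro: disintegrates_add)
next
  case (seq U)
  then show ?case
    by (blast intro: disintegrates_SUP)
qed

lemma nn_integral_psi:
  "(\<integral>\<^sup>+w. indicator {w. fst (snd w) < t} w * ennreal ((1 - (1 - fst w) ^ i) * (1 - fst w) ^ k) \<partial>\<nu>)
    = (\<integral>\<^sup>+s. indicator {0..<t} s * psi \<rho> i k s \<partial>marginal_s \<Lambda>0)"
proof -
  have "(\<lambda>u. ennreal ((1 - (1 - u) ^ i) * (1 - u) ^ k)) \<in> borel_measurable (restrict_space borel {0..1})"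
    by (intro measurable_restrict_space1) measurable
  note disintegration = disintegrates[OF this, of t, unfolded disintegrates_def]
  then have [measurable]: "psi \<rho> i k \<in> borel_measurable borel"
    by (simp add: psi_def[abs_def])
  have "(\<integral>\<^sup>+s. indicator {0..<t} s * psi \<rho> i k s \<partial>marginal_s \<Lambda>0)
      = (\<integral>\<^sup>+sx. indicator {0..<t} (fst sx) * psi \<rho> i k (fst sx) \<partial>\<Lambda>0)"
    by (rule nn_integral_marginal_s[OF sets_Lambda0]) measurable
  then show ?thesis
    using disintegration by (simp add: psi_def)
qed

lemma nn_integral_one_minus_exp_neg_hazard:
  fixes t :: "nat \<Rightarrow> real" and m :: "nat \<Rightarrow> nat"
  assumes dec: "\<And>j. 1 \<le> j \<Longrightarrow> j < k \<Longrightarrow> t (Suc j) < t j"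
  shows "(\<integral>\<^sup>+w. ennreal (1 - exp_neg (\<Sum>j=1..k. of_nat (m j) * (indicator {w. fst (snd w) < t j} w * neglog1m (fst w)))) \<partial>\<nu>)
    = (\<Sum>j=1..k. \<integral>\<^sup>+s. indicator {0..<t j} s * psi \<rho> (m j) (\<Sum>l=1..j-1. m l) s \<partial>marginal_s \<Lambda>0)"
proof -
  have "(\<integral>\<^sup>+w. ennreal (1 - exp_neg (\<Sum>j=1..k. of_nat (m j) * (indicator {w. fst (snd w) < t j} w * neglog1m (fst w)))) \<partial>\<nu>)
      = (\<integral>\<^sup>+w. (\<Sum>j=1..k. indicator {w. fst (snd w) < t j} w *
          ennreal ((1 - (1 - fst w) ^ m j) * (1 - fst w) ^ (\<Sum>l=1..j-1. m l))) \<partial>\<nu>)"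
    by (intro nn_integral_cong one_minus_exp_neg_hazard dec) (auto simp: space_nu)
  also have "\<dots> = (\<Sum>j=1..k. \<integral>\<^sup>+w. indicator {w. fst (snd w) < t j} w *
      ennreal ((1 - (1 - fst w) ^ m j) * (1 - fst w) ^ (\<Sum>l=1..j-1. m l)) \<partial>\<nu>)"
    by (intro nn_integral_sum) (unfold measurable_cong_sets[OF sets_nu refl], measurable)
  also have "\<dots> = (\<Sum>j=1..k. \<integral>\<^sup>+s. indicator {0..<t j} s * psi \<rho> (m j) (\<Sum>l=1..j-1. m l) s \<partial>marginal_s \<Lambda>0)"
    by (intro sum.cong refl nn_integral_psi)
  finally show ?thesis .
qed

end

lemma expectation_prod_surv_minus_power:
  fixes P :: "'o measure" and N :: "'o \<Rightarrow> (real \<times> real \<times> 'x::polish_space) measure"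
    and \<Lambda>0 :: "(real \<times> 'x) measure" and \<rho> :: "real \<Rightarrow> real measure"
    and \<nu> :: "(real \<times> real \<times> 'x) measure" and t :: "nat \<Rightarrow> real" and m :: "nat \<Rightarrow> nat"
  assumes "poisson_rm P Wspace \<nu> N" and "kernel_intensity \<Lambda>0 \<rho> \<nu>"
    and dec: "\<And>j. 1 \<le> j \<Longrightarrow> j < k \<Longrightarrow> t (Suc j) < t j"
  shows "prob_space.expectation P (\<lambda>\<omega>. \<Prod>j = 1..k. surv_minus (N \<omega>) (t j) ^ m j)
    = (\<Prod>j = 1..k. exp_neg (\<integral>\<^sup>+s. indicator {0..<t j} s * psi \<rho> (m j) (\<Sum>l=1..j-1. m l) s
        \<partial>marginal_s \<Lambda>0))"
proof -
  interpret poisson_rm P Wspace \<nu> N by fact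
  interpret kernel_intensity \<Lambda>0 \<rho> \<nu> by fact
  define g where "g w = (\<Sum>j=1..k. of_nat (m j) * (indicator {w. fst (snd w) < t j} w * neglog1m (fst w)))"
    for w :: "real \<times> real \<times> 'x"
  have "g \<in> borel_measurable Wspace"
    unfolding g_def by measurable
  have "expectation (\<lambda>\<omega>. \<Prod>j = 1..k. surv_minus (N \<omega>) (t j) ^ m j)
      = (\<integral>\<omega>. exp_neg (\<integral>\<^sup>+w. g w \<partial>N \<omega>) \<partial>P)"
    by (intro Bochner_Integration.integral_cong) (simp_all add: prod_surv_minus_power sets_N g_def)
  also have "\<dots> = exp_neg (\<integral>\<^sup>+w. ennreal (1 - exp_neg (g w)) \<partial>\<nu>)"
    using \<open>g \<in> borel_measurable Wspace\<close> by (rule laplace_functional)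
  also have "\<dots> = exp_neg (\<Sum>j = 1..k. \<integral>\<^sup>+s. indicator {0..<t j} s * psi \<rho> (m j) (\<Sum>l=1..j-1. m l) s
      \<partial>marginal_s \<Lambda>0)"
    unfolding g_def by (simp only: nn_integral_one_minus_exp_neg_hazard[where k=k and t=t and m=m, OF dec])
  also have "\<dots> = (\<Prod>j = 1..k. exp_neg (\<integral>\<^sup>+s. indicator {0..<t j} s * psi \<rho> (m j) (\<Sum>l=1..j-1. m l) s
      \<partial>marginal_s \<Lambda>0))"
    by (rule exp_neg_sum)
  finally show ?thesis .
qed

theorem lemma5p1:
  fixes F0 :: "(real \<times> 'x::polish_space) measure"
    and \<Lambda>0 :: "(real \<times> 'x) measure"
    and \<rho> :: "real \<Rightarrow> real measure"
    and \<nu> :: "(real \<times> real \<times> 'x) measure"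
    and P :: "'o measure"
    and N :: "'o \<Rightarrow> (real \<times> real \<times> 'x) measure"
    and k :: nat and t :: "nat \<Rightarrow> real" and m :: "nat \<Rightarrow> nat" and r :: "nat \<Rightarrow> nat"
  assumes F0_prob: "prob_space F0" and F0_sets: "sets F0 = sets borel"
    and F0_pos: "emeasure F0 ({..<0} \<times> UNIV) = 0"
    and Lambda0: "\<Lambda>0 = hazard_measure F0"
    and no_atoms: "\<And>s. emeasure \<Lambda>0 ({s} \<times> UNIV) = 0"
    and levy: "\<And>s. levy_measure_01 (\<rho> s)"
    and kernel: "\<And>A. A \<in> sets (restrict_space borel {0..1::real}) \<Longrightarrow>
                    (\<lambda>s. emeasure (\<rho> s) A) \<in> borel_measurable borel"
    and nu_sets: "sets \<nu> = sets (Wspace :: (real \<times> real \<times> 'x) measure)"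
    and nu_def: "\<And>A. A \<in> sets (Wspace :: (real \<times> real \<times> 'x) measure) \<Longrightarrow>
        emeasure \<nu> A = (\<integral>\<^sup>+ sx. (\<integral>\<^sup>+ u. indicator A (u, fst sx, snd sx) \<partial>(\<rho> (fst sx))) \<partial>\<Lambda>0)"
    and PRM: "poisson_random_measure P Wspace \<nu> N"
    and t_dec: "\<And>j. 1 \<le> j \<Longrightarrow> j < k \<Longrightarrow> t (Suc j) < t j"
    and t_pos: "k \<ge> 1 \<Longrightarrow> t k > 0"
    and m_pos: "\<And>j. 1 \<le> j \<Longrightarrow> j \<le> k \<Longrightarrow> m j > 0"
    and r_def: "\<And>j. r j = (\<Sum>l = 1..j. m l)"
  shows "prob_space.expectation P (\<lambda>\<omega>. \<Prod>j = 1..k. surv_minus (N \<omega>) (t j) ^ m j)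
           = (\<Prod>j = 1..k. exp_neg (\<integral>\<^sup>+ s. indicator {0..<t j} s * psi \<rho> (m j) (r (j - 1)) s
                                        \<partial>(marginal_s \<Lambda>0)))
       \<and> ((\<forall>j\<in>{1..k}. m j = 1) \<longrightarrow>
           prob_space.expectation P (\<lambda>\<omega>. \<Prod>j = 1..k. surv_minus (N \<omega>) (t j))
           = (\<Prod>j = 1..k. exp_neg (\<integral>\<^sup>+ s. indicator {0..<t j} s * psi \<rho> 1 (j - 1) s
                                        \<partial>(marginal_s \<Lambda>0))))"
proof -
  have intensity: "kernel_intensity \<Lambda>0 \<rho> \<nu>"
    using levy kernel F0_sets nu_sets nu_def
    by unfold_locales (auto simp: levy_measure_01_def Lambda0 hazard_measure_def)
  have main: "prob_space.expectation P (\<lambda>\<omega>. \<Prod>j = 1..k. surv_minus (N \<omega>) (t j) ^ m j)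
      = (\<Prod>j = 1..k. exp_neg (\<integral>\<^sup>+ s. indicator {0..<t j} s * psi \<rho> (m j) (r (j - 1)) s
          \<partial>(marginal_s \<Lambda>0)))"
    using expectation_prod_surv_minus_power[where k=k and t=t and m=m, OF poisson_rm.intro[OF PRM] intensity t_dec]
    by (simp add: r_def)
  moreover have "r (j - 1) = j - 1" if "\<forall>j\<in>{1..k}. m j = 1" "j \<in> {1..k}" for j
  proof -
    have "r (j - 1) = (\<Sum>l=1..j-1. 1)"
      unfolding r_def using that by (intro sum.cong) auto
    then show ?thesis
      by simp
  qed
  ultimately show ?thesis
    by (auto intro!: prod.cong Bochner_Integration.integral_cong)
qed

end
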